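(* Let $\mathbf{M}$ be any many-valued logic and let $A_1,\ldots,A_n$ be formulas that are not tautologies of $\mathbf{M}$. Then there is a finite-valued logic $\mathbf{M}'$ over the same language such that (1) none of $A_1,\ldots,A_n$ is a tautology of $\mathbf{M}'$; (2) $\mathrm{Taut}(\mathbf{M})\subseteq\mathrm{Taut}(\mathbf{M}')$; and (3) $|V(\mathbf{M}')| \le \prod_{i=1}^n \xi(A_i)$, where $\xi(A_i)$ is the number of subformulas of $A_i$ plus $1$.
   Context: A propositional language consists of variables $X_1,X_2,\ldots$ and finitely many connectives with given arities (0-ary ones are constants). A many-valued logic $\mathbf{M}$ is given by a set $V(\mathbf{M})$ of truth values, a subset $V^+(\mathbf{M})$ of designated values, and for each $n$-ary connective $\Box$ a truth function $\widetilde{\Box}\colon V(\mathbf{M})^n\to V(\mathbf{M})$; it is finite-valued if $V(\mathbf{M})$ is finite. A valuation assigns truth values to variables and extends to all formulas via the truth functions. A formula is a tautology of $\mathbf{M}$ if it receives a designated value under every valuation; $\mathrm{Taut}(\mathbf{M})$ denotes the set of tautologies. *)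

theory Defs
  imports Main
begin

text \<open>Formulas over variables X_0, X_1, ... (indexed by nat) and connectives of type 'c.
  A language is given by a finite type 'c of connectives together with an arity function.\<close>

datatype 'c form = Var nat | Op 'c "'c form list"

fun wf :: "('c \<Rightarrow> nat) \<Rightarrow> 'c form \<Rightarrow> bool" where
  "wf ar (Var n) = True"
| "wf ar (Op c args) = (length args = ar c \<and> (\<forall>a\<in>set args. wf ar a))"

fun subformulas :: "'c form \<Rightarrow> 'c form set" where
  "subformulas (Var n) = {Var n}"
| "subformulas (Op c args) = insert (Op c args) (\<Union>a\<in>set args. subformulas a)"

definition is_logic :: "('c \<Rightarrow> nat) \<Rightarrow> 'v set \<Rightarrow> 'v set \<Rightarrow> ('c \<Rightarrow> 'v list \<Rightarrow> 'v) \<Rightarrow> bool" where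
  "is_logic ar V D F \<longleftrightarrow> D \<subseteq> V \<and>
     (\<forall>c xs. length xs = ar c \<and> set xs \<subseteq> V \<longrightarrow> F c xs \<in> V)"

fun eval :: "('c \<Rightarrow> 'v list \<Rightarrow> 'v) \<Rightarrow> (nat \<Rightarrow> 'v) \<Rightarrow> 'c form \<Rightarrow> 'v" where
  "eval F v (Var n) = v n"
| "eval F v (Op c args) = F c (map (eval F v) args)"

definition taut :: "('c \<Rightarrow> nat) \<Rightarrow> 'v set \<Rightarrow> 'v set \<Rightarrow> ('c \<Rightarrow> 'v list \<Rightarrow> 'v) \<Rightarrow> 'c form \<Rightarrow> bool" where
  "taut ar V D F A \<longleftrightarrow> wf ar A \<and> (\<forall>v. range v \<subseteq> V \<longrightarrow> eval F v A \<in> D)"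

end

theory Submission
  imports Defs
begin

text \<open>A valuation refuting a formula A only uses the finitely many values W it assigns to the
  subformulas of A. Keeping these values and collapsing every computation that leaves W into
  one new designated value gives a logic with at most |subformulas A| + 1 values that still
  refutes A, and in which every tautology of the original logic survives: a valuation either
  produces the new value or replays a computation of the original logic. For several formulas
  take the direct product of these logics, whose tautologies are the common ones, and
  renumber its finitely many values by natural numbers.\<close>

lemma finite_subformulas: "finite (subformulas A)"
  by (induction A) auto

lemma subformulas_refl: "A \<in> subformulas A"
  by (cases A) auto

lemma wf_subformulas: "wf ar A \<Longrightarrow> B \<in> subformulas A \<Longrightarrow> wf ar B"
  by (induction A) auto

lemma eval_closed:
  assumes "is_logic ar V D F" and "range v \<subseteq> V" and "wf ar B"
  shows "eval F v B \<in> V"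
  using assms(3)
proof (induction B)
  case (Var n)
  then show ?case using assms(2) by auto
next
  case (Op c args)
  then have "length (map (eval F v) args) = ar c" "set (map (eval F v) args) \<subseteq> V"
    by auto
  then show ?case using assms(1) by (simp add: is_logic_def)
qed

lemma taut_singleton_logic: "wf ar B \<Longrightarrow> taut ar {x} {x} (\<lambda>_ _. x) B"
  using eval_closed[of ar "{x}" "{x}" "\<lambda>_ _. x"] by (auto simp: taut_def is_logic_def)

definition is_logic_hom ::
    "('c \<Rightarrow> nat) \<Rightarrow> 'a set \<Rightarrow> ('c \<Rightarrow> 'a list \<Rightarrow> 'a) \<Rightarrow> 'b set \<Rightarrow> ('c \<Rightarrow> 'b list \<Rightarrow> 'b)
      \<Rightarrow> ('a \<Rightarrow> 'b) \<Rightarrow> bool" where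
  "is_logic_hom ar V F V' F' h \<longleftrightarrow> h ` V \<subseteq> V' \<and>
     (\<forall>c xs. length xs = ar c \<and> set xs \<subseteq> V \<longrightarrow> h (F c xs) = F' c (map h xs))"

lemma eval_hom:
  assumes L: "is_logic ar V D F" and h: "is_logic_hom ar V F V' F' h"
    and w: "range w \<subseteq> V" and "wf ar B"
  shows "h (eval F w B) = eval F' (h \<circ> w) B"
  using \<open>wf ar B\<close>
proof (induction B)
  case (Op c args)
  have "length (map (eval F w) args) = ar c" "set (map (eval F w) args) \<subseteq> V"
    using Op.prems eval_closed[OF L w] by auto
  then have "h (eval F w (Op c args)) = F' c (map h (map (eval F w) args))"
    using h by (simp add: is_logic_hom_def)
  also have "map h (map (eval F w) args) = map (eval F' (h \<circ> w)) args"
    using Op by (simp add: comp_def)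
  finally show ?case by (simp add: comp_def)
qed simp

lemma taut_hom_onto:
  assumes L: "is_logic ar V D F" and h: "is_logic_hom ar V F V' F' h"
    and onto: "h ` V = V'" and des: "h ` D \<subseteq> D'"
    and taut: "taut ar V D F B"
  shows "taut ar V' D' F' B"
  unfolding taut_def
proof (intro conjI allI impI)
  show wf: "wf ar B" using taut by (simp add: taut_def)
  fix u :: "nat \<Rightarrow> _" assume u: "range u \<subseteq> V'"
  define w where "w = inv_into V h \<circ> u"
  have w: "range w \<subseteq> V"
    using u onto by (auto simp: w_def inv_into_into)
  have hw: "h \<circ> w = u"
    using u onto by (metis w_def comp_apply f_inv_into_f fun_eq_iff range_subsetD)
  have "eval F w B \<in> D" using taut w by (simp add: taut_def)
  then show "eval F' u B \<in> D'"
    using eval_hom[OF L h w wf] hw des by auto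
qed

lemma taut_hom_pullback:
  assumes L: "is_logic ar V D F" and h: "is_logic_hom ar V F V' F' h"
    and des: "\<forall>x\<in>V. h x \<in> D' \<longrightarrow> x \<in> D"
    and taut: "taut ar V' D' F' B"
  shows "taut ar V D F B"
  unfolding taut_def
proof (intro conjI allI impI)
  show wf: "wf ar B" using taut by (simp add: taut_def)
  fix w :: "nat \<Rightarrow> _" assume w: "range w \<subseteq> V"
  then have "range (h \<circ> w) \<subseteq> V'" using h by (auto simp: is_logic_hom_def)
  then have "h (eval F w B) \<in> D'"
    using taut eval_hom[OF L h w wf] by (simp add: taut_def)
  then show "eval F w B \<in> D"
    using des eval_closed[OF L w wf] by blast
qed

lemma finite_logic_nat_copy:
  fixes V D :: "'v set"
  assumes L: "is_logic ar V D F" and fin: "finite V"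
  shows "\<exists>(V'::nat set) D' F'. is_logic ar V' D' F' \<and> finite V' \<and> card V' = card V \<and>
           (\<forall>B. taut ar V' D' F' B \<longleftrightarrow> taut ar V D F B)"
proof -
  define N where "N = {0..<card V}"
  obtain h where bij: "bij_betw h N V"
    using ex_bij_betw_nat_finite[OF fin] unfolding N_def by blast
  define D' where "D' = {i \<in> N. h i \<in> D}"
  define F' where "F' c ns = inv_into N h (F c (map h ns))" for c ns
  have F_closed: "F c (map h ns) \<in> h ` N" if "length ns = ar c" "set ns \<subseteq> N" for c ns
  proof -
    have "set (map h ns) \<subseteq> V" using bij that by (auto simp: bij_betw_def)
    then show ?thesis using L bij that by (auto simp: is_logic_def bij_betw_def)
  qed
  have L': "is_logic ar N D' F'"
    using F_closed by (auto simp: is_logic_def D'_def F'_def inv_into_into)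
  have h: "is_logic_hom ar N F' V F h"
    using bij F_closed by (auto simp: is_logic_hom_def F'_def bij_betw_def f_inv_into_f)
  have "taut ar N D' F' B \<longleftrightarrow> taut ar V D F B" for B
    using taut_hom_onto[OF L' h] taut_hom_pullback[OF L' h] bij
    by (auto simp: bij_betw_def D'_def)
  then show ?thesis
    using L' by (intro exI[of _ N] exI[of _ D'] exI[of _ F']) (simp add: N_def)
qed

definition prod_ops ::
    "('c \<Rightarrow> 'a list \<Rightarrow> 'a) \<Rightarrow> ('c \<Rightarrow> 'b list \<Rightarrow> 'b) \<Rightarrow> 'c \<Rightarrow> ('a \<times> 'b) list \<Rightarrow> 'a \<times> 'b" where
  "prod_ops F1 F2 c xs = (F1 c (map fst xs), F2 c (map snd xs))"

lemma is_logic_prod: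
  assumes "is_logic ar V1 D1 F1" and "is_logic ar V2 D2 F2"
  shows "is_logic ar (V1 \<times> V2) (D1 \<times> D2) (prod_ops F1 F2)"
proof -
  have "set (map fst xs) \<subseteq> V1" "set (map snd xs) \<subseteq> V2" if "set xs \<subseteq> V1 \<times> V2" for xs
    using that by auto
  then show ?thesis
    using assms by (auto simp: is_logic_def prod_ops_def)
qed

lemma is_logic_hom_fst: "is_logic_hom ar (V1 \<times> V2) (prod_ops F1 F2) V1 F1 fst"
  by (auto simp: is_logic_hom_def prod_ops_def)

lemma is_logic_hom_snd: "is_logic_hom ar (V1 \<times> V2) (prod_ops F1 F2) V2 F2 snd"
  by (auto simp: is_logic_hom_def prod_ops_def)

lemma taut_prod_iff:
  assumes L1: "is_logic ar V1 D1 F1" and L2: "is_logic ar V2 D2 F2"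
    and "V1 \<noteq> {}" and "V2 \<noteq> {}"
  shows "taut ar (V1 \<times> V2) (D1 \<times> D2) (prod_ops F1 F2) B \<longleftrightarrow>
           taut ar V1 D1 F1 B \<and> taut ar V2 D2 F2 B"
proof -
  note L = is_logic_prod[OF L1 L2]
  have "fst ` (V1 \<times> V2) = V1" "snd ` (V1 \<times> V2) = V2"
    using \<open>V1 \<noteq> {}\<close> \<open>V2 \<noteq> {}\<close> by auto
  then have "taut ar V1 D1 F1 B \<and> taut ar V2 D2 F2 B"
    if "taut ar (V1 \<times> V2) (D1 \<times> D2) (prod_ops F1 F2) B"
    using taut_hom_onto[OF L is_logic_hom_fst] taut_hom_onto[OF L is_logic_hom_snd] that by auto
  moreover have "taut ar (V1 \<times> V2) (D1 \<times> D2) (prod_ops F1 F2) B"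
    if taut: "taut ar V1 D1 F1 B \<and> taut ar V2 D2 F2 B"
    unfolding taut_def
  proof (intro conjI allI impI)
    show wf: "wf ar B" using taut by (simp add: taut_def)
    fix w :: "nat \<Rightarrow> _" assume w: "range w \<subseteq> V1 \<times> V2"
    then have "range (fst \<circ> w) \<subseteq> V1" "range (snd \<circ> w) \<subseteq> V2" by auto
    then have "fst (eval (prod_ops F1 F2) w B) \<in> D1" "snd (eval (prod_ops F1 F2) w B) \<in> D2"
      using taut eval_hom[OF L is_logic_hom_fst w wf] eval_hom[OF L is_logic_hom_snd w wf]
      by (simp_all add: taut_def)
    then show "eval (prod_ops F1 F2) w B \<in> D1 \<times> D2"
      by (simp add: mem_Times_iff)
  qed
  ultimately show ?thesis by blast
qed

definition truncate_ops ::
    "'v set \<Rightarrow> ('c \<Rightarrow> 'v list \<Rightarrow> 'v) \<Rightarrow> 'c \<Rightarrow> 'v option list \<Rightarrow> 'v option" where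
  "truncate_ops W F c xs =
     (if set xs \<subseteq> Some ` W \<and> F c (map the xs) \<in> W then Some (F c (map the xs)) else None)"

lemma is_logic_truncate:
  "is_logic ar (insert None (Some ` W)) (insert None (Some ` (D \<inter> W))) (truncate_ops W F)"
  by (auto simp: is_logic_def truncate_ops_def)

lemma truncate_ops_eq_Some:
  "truncate_ops W F c xs = Some y \<longleftrightarrow>
     set xs \<subseteq> Some ` W \<and> F c (map the xs) \<in> W \<and> y = F c (map the xs)"
  by (auto simp: truncate_ops_def)

lemma truncate_ops_map_Some:
  "set xs \<subseteq> W \<Longrightarrow> F c xs \<in> W \<Longrightarrow> truncate_ops W F c (map Some xs) = Some (F c xs)"
  by (auto simp: truncate_ops_def)

(* The default x0 is never read: a variable valued None makes the whole evaluation None. *)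
lemma eval_truncate_Some:
  assumes "eval (truncate_ops W F) w B = Some y"
  shows "y = eval F (\<lambda>n. case w n of None \<Rightarrow> x0 | Some x \<Rightarrow> x) B"
  using assms
proof (induction B arbitrary: y)
  case (Op c args)
  let ?w = "\<lambda>n. case w n of None \<Rightarrow> x0 | Some x \<Rightarrow> x"
  let ?xs = "map (eval (truncate_ops W F) w) args"
  have args: "set ?xs \<subseteq> Some ` W" and y: "y = F c (map the ?xs)"
    using Op.prems by (simp_all add: truncate_ops_eq_Some)
  have "the (eval (truncate_ops W F) w a) = eval F ?w a" if a: "a \<in> set args" for a
  proof -
    obtain z where "eval (truncate_ops W F) w a = Some z" using args a by auto
    then show ?thesis using Op.IH[OF a] by simp
  qed
  then have "map the ?xs = map (eval F ?w) args" by simp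
  then show ?case using y by (simp cong: map_cong)
qed simp

lemma eval_truncate_agrees:
  assumes "\<forall>C \<in> subformulas B. eval F v C \<in> W"
    and "\<forall>n. Var n \<in> subformulas B \<longrightarrow> w n = Some (v n)"
  shows "eval (truncate_ops W F) w B = Some (eval F v B)"
  using assms
proof (induction B)
  case (Op c args)
  then have "map (eval (truncate_ops W F) w) args = map Some (map (eval F v) args)"
    by auto
  then have "eval (truncate_ops W F) w (Op c args) =
      truncate_ops W F c (map Some (map (eval F v) args))"
    by (simp del: map_map)
  also have "\<dots> = Some (F c (map (eval F v) args))"
    using Op.prems(1) subformulas_refl by (intro truncate_ops_map_Some) fastforce+
  finally show ?case by simp
qed simp

lemma taut_truncate:
  assumes L: "is_logic ar V D F" and "W \<subseteq> V" and "W \<noteq> {}"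
    and taut: "taut ar V D F B"
  shows "taut ar (insert None (Some ` W)) (insert None (Some ` (D \<inter> W))) (truncate_ops W F) B"
  unfolding taut_def
proof (intro conjI allI impI)
  show wf: "wf ar B" using taut by (simp add: taut_def)
  obtain x0 where "x0 \<in> W" using \<open>W \<noteq> {}\<close> by auto
  fix w :: "nat \<Rightarrow> _" assume w: "range w \<subseteq> insert None (Some ` W)"
  show "eval (truncate_ops W F) w B \<in> insert None (Some ` (D \<inter> W))"
  proof (cases "eval (truncate_ops W F) w B")
    case (Some y)
    let ?w = "\<lambda>n. case w n of None \<Rightarrow> x0 | Some x \<Rightarrow> x"
    have "?w n \<in> W" for n
      using range_subsetD[OF w, of n] \<open>x0 \<in> W\<close> by (cases "w n") auto
    then have "range ?w \<subseteq> V"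
      using \<open>W \<subseteq> V\<close> by auto
    then have "y \<in> D"
      using taut eval_truncate_Some[OF Some, of x0] by (simp add: taut_def)
    moreover have "y \<in> W"
      using eval_closed[OF is_logic_truncate[of ar W D F] w wf] Some by auto
    ultimately show ?thesis using Some by simp
  qed simp
qed

lemma finite_logic_refuting_formula:
  fixes V D :: "'v set"
  assumes L: "is_logic ar V D F" and wf: "wf ar A" and not_taut: "\<not> taut ar V D F A"
  shows "\<exists>(V'::'v option set) D' F'. is_logic ar V' D' F' \<and> finite V' \<and> V' \<noteq> {} \<and>
           \<not> taut ar V' D' F' A \<and> (\<forall>B. taut ar V D F B \<longrightarrow> taut ar V' D' F' B) \<and>
           card V' \<le> card (subformulas A) + 1"
proof -
  obtain v where v: "range v \<subseteq> V" and vA: "eval F v A \<notin> D"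
    using wf not_taut by (auto simp: taut_def)
  define W where "W = eval F v ` subformulas A"
  define V' where "V' = insert None (Some ` W)"
  define D' where "D' = insert None (Some ` (D \<inter> W))"
  define w where "w n = (if Var n \<in> subformulas A then Some (v n) else None)" for n
  have "finite W"
    by (simp add: W_def finite_subformulas)
  have "W \<subseteq> V"
    using eval_closed[OF L v] wf_subformulas[OF wf] by (auto simp: W_def)
  moreover have "W \<noteq> {}"
    using subformulas_refl by (auto simp: W_def)
  ultimately have "\<forall>B. taut ar V D F B \<longrightarrow> taut ar V' D' (truncate_ops W F) B"
    using taut_truncate[OF L] by (simp add: V'_def D'_def)
  moreover have "\<not> taut ar V' D' (truncate_ops W F) A"
  proof
    have "range w \<subseteq> V'"
      by (force simp: w_def V'_def W_def)
    moreover have "eval (truncate_ops W F) w A = Some (eval F v A)"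
      by (rule eval_truncate_agrees) (auto simp: W_def w_def)
    moreover assume "taut ar V' D' (truncate_ops W F) A"
    ultimately show False
      using vA by (force simp: taut_def D'_def)
  qed
  moreover have "card V' \<le> card (subformulas A) + 1"
  proof -
    have "card V' \<le> card (Some ` W) + 1"
      using \<open>finite W\<close> by (simp add: V'_def card_insert_if)
    also have "\<dots> \<le> card (subformulas A) + 1"
      using card_image_le[OF finite_subformulas] by (simp add: W_def card_image)
    finally show ?thesis .
  qed
  moreover have "is_logic ar V' D' (truncate_ops W F)"
    unfolding V'_def D'_def by (rule is_logic_truncate)
  moreover have "finite V'" "V' \<noteq> {}"
    using \<open>finite W\<close> by (simp_all add: V'_def)
  ultimately show ?thesis
    by (intro exI[of _ V'] exI[of _ D'] exI[of _ "truncate_ops W F"]) simp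
qed

lemma finite_logic_refuting_formulas:
  fixes V D :: "'v set"
  assumes L: "is_logic ar V D F"
  shows "\<forall>A\<in>set As. wf ar A \<and> \<not> taut ar V D F A \<Longrightarrow>
         \<exists>(V'::nat set) D' F'. is_logic ar V' D' F' \<and> finite V' \<and> V' \<noteq> {} \<and>
           (\<forall>A\<in>set As. \<not> taut ar V' D' F' A) \<and>
           (\<forall>B. taut ar V D F B \<longrightarrow> taut ar V' D' F' B) \<and>
           card V' \<le> (\<Prod>A\<leftarrow>As. card (subformulas A) + 1)"
proof (induction As)
  case Nil
  have "is_logic ar {0::nat} {0} (\<lambda>_ _. 0)"
    by (simp add: is_logic_def)
  moreover have "\<forall>B. taut ar V D F B \<longrightarrow> taut ar {0::nat} {0} (\<lambda>_ _. 0) B"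
    using taut_singleton_logic by (metis taut_def)
  ultimately show ?case
    by (intro exI[of _ "{0::nat}"]) auto
next
  case (Cons A As)
  then have "wf ar A" "\<not> taut ar V D F A" "\<forall>A\<in>set As. wf ar A \<and> \<not> taut ar V D F A"
    by simp_all
  obtain V1 :: "'v option set" and D1 F1 where L1: "is_logic ar V1 D1 F1"
    and V1: "finite V1" "V1 \<noteq> {}" "card V1 \<le> card (subformulas A) + 1"
    and refutes1: "\<not> taut ar V1 D1 F1 A"
    and extends1: "\<forall>B. taut ar V D F B \<longrightarrow> taut ar V1 D1 F1 B"
    using finite_logic_refuting_formula[OF L \<open>wf ar A\<close> \<open>\<not> taut ar V D F A\<close>] by blast
  obtain V2 :: "nat set" and D2 F2 where L2: "is_logic ar V2 D2 F2"
    and V2: "finite V2" "V2 \<noteq> {}" "card V2 \<le> (\<Prod>A\<leftarrow>As. card (subformulas A) + 1)"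
    and refutes2: "\<forall>A\<in>set As. \<not> taut ar V2 D2 F2 A"
    and extends2: "\<forall>B. taut ar V D F B \<longrightarrow> taut ar V2 D2 F2 B"
    using Cons.IH \<open>\<forall>A\<in>set As. wf ar A \<and> \<not> taut ar V D F A\<close> by blast
  obtain V' :: "nat set" and D' F' where L': "is_logic ar V' D' F'"
    and V': "finite V'" "card V' = card V1 * card V2"
    and taut': "\<And>B. taut ar V' D' F' B \<longleftrightarrow> taut ar V1 D1 F1 B \<and> taut ar V2 D2 F2 B"
    using finite_logic_nat_copy[OF is_logic_prod[OF L1 L2]] V1 V2 taut_prod_iff[OF L1 L2]
    by (auto simp: card_cartesian_product)
  have "card V' \<le> (\<Prod>A\<leftarrow>A # As. card (subformulas A) + 1)"
    using mult_le_mono[OF V1(3) V2(3)] V'(2) by simp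
  moreover have "V' \<noteq> {}"
    using V' V1 V2 by auto
  moreover have "\<forall>B\<in>set (A # As). \<not> taut ar V' D' F' B"
    using taut' refutes1 refutes2 by auto
  moreover have "\<forall>B. taut ar V D F B \<longrightarrow> taut ar V' D' F' B"
    using taut' extends1 extends2 by auto
  ultimately show ?case
    using L' \<open>finite V'\<close> by (intro exI[of _ V'] exI[of _ D'] exI[of _ F']) simp
qed

theorem proposition2:
  fixes ar :: "'c::finite \<Rightarrow> nat"
    and V D :: "'v set" and F :: "'c \<Rightarrow> 'v list \<Rightarrow> 'v"
    and As :: "'c form list"
  assumes "is_logic ar V D F"
    and "\<forall>A\<in>set As. wf ar A \<and> \<not> taut ar V D F A"
  shows "\<exists>(V'::nat set) D' F'. is_logic ar V' D' F' \<and> finite V' \<and>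
           (\<forall>A\<in>set As. \<not> taut ar V' D' F' A) \<and>
           (\<forall>A. taut ar V D F A \<longrightarrow> taut ar V' D' F' A) \<and>
           card V' \<le> (\<Prod>A\<leftarrow>As. card (subformulas A) + 1)"
  using finite_logic_refuting_formulas[OF assms] by blast

end
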